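(* Let $J\in\mathbb{R}^{3\times3}$ be symmetric positive definite, and let $R_d:[0,\infty)\to\mathsf{SO(3)}$ be a $C^2$ attitude command with $\dot R_d=R_d\hat\Omega_d$. Let $k_R,k_\Omega>0$ and define the control $$u=-k_Re_R-k_\Omega e_\Omega+\Omega\times J\Omega-J\big(\hat\Omega R^TR_d\Omega_d-R^TR_d\dot\Omega_d\big).$$ Consider the closed-loop system $J\dot\Omega+\Omega\times J\Omega=u$, $\dot R=R\hat\Omega$. If the initial condition satisfies $$\Psi(R(0),R_d(0))<2,\qquad \|e_\Omega(0)\|^2<\frac{2k_R}{\lambda_{\max}(J)}\big(2-\Psi(R(0),R_d(0))\big),$$ then $\Psi(R(t),R_d(t))<2$ for all $t\ge0$ (so $e_R$ remains well defined), and the zero equilibrium $(e_R,e_\Omega)=(0,0)$ is exponentially stable with this set contained in its region of attraction: there exist constants $C,\beta>0$ (depending on $J,k_R,k_\Omega$) such that $$\|e_R(t)\|^2+\|e_\Omega(t)\|^2\le C\big(\|e_R(0)\|^2+\|e_\Omega(0)\|^2\big)e^{-\beta t}\quad\text{for all }t\ge0.$$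
   Context: $\mathsf{SO(3)}$ is the group of $3\times3$ rotation matrices; $\hat x$ denotes the skew-symmetric matrix with $\hat x y=x\times y$, and $\vee$ is its inverse. $\Psi(R,R_d)=2-\sqrt{1+\mathrm{tr}(R_d^TR)}$, $e_R=\frac{1}{2\sqrt{1+\mathrm{tr}(R_d^TR)}}(R_d^TR-R^TR_d)^\vee$ (defined when $\Psi<2$), and $e_\Omega=\Omega-R^TR_d\Omega_d$. $\lambda_{\max}(J)$ is the largest eigenvalue of $J$. *)

theory Defs
  imports "HOL-Analysis.Analysis"
begin

text \<open>hat map: hat x is the skew-symmetric matrix with (hat x) *v y = cross3 x y\<close>
definition hat :: "real^3 \<Rightarrow> real^3^3" where
  "hat x = vector [vector [0, - x$3, x$2],
                   vector [x$3, 0, - x$1],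
                   vector [- x$2, x$1, 0]]"

text \<open>vee map: inverse of hat on skew-symmetric matrices\<close>
definition vee :: "real^3^3 \<Rightarrow> real^3" where
  "vee M = vector [M$3$2, M$1$3, M$2$1]"

definition SO3 :: "(real^3^3) set" where
  "SO3 = {R. transpose R ** R = mat 1 \<and> det R = 1}"

definition Psi :: "real^3^3 \<Rightarrow> real^3^3 \<Rightarrow> real" where
  "Psi R Rd = 2 - sqrt (1 + trace (transpose Rd ** R))"

definition eR :: "real^3^3 \<Rightarrow> real^3^3 \<Rightarrow> real^3" where
  "eR R Rd = (1 / (2 * sqrt (1 + trace (transpose Rd ** R))))
              *\<^sub>R vee (transpose Rd ** R - transpose R ** Rd)"

definition eOmega :: "real^3^3 \<Rightarrow> real^3 \<Rightarrow> real^3^3 \<Rightarrow> real^3 \<Rightarrow> real^3" where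
  "eOmega R Om Rd Omd = Om - (transpose R ** Rd) *v Omd"

definition sym_posdef :: "real^3^3 \<Rightarrow> bool" where
  "sym_posdef J \<longleftrightarrow> transpose J = J \<and> (\<forall>x. x \<noteq> 0 \<longrightarrow> x \<bullet> (J *v x) > 0)"

definition lambda_max :: "real^3^3 \<Rightarrow> real" where
  "lambda_max J = Max {l. \<exists>v. v \<noteq> 0 \<and> J *v v = l *\<^sub>R v}"

definition ctrl :: "real^3^3 \<Rightarrow> real \<Rightarrow> real \<Rightarrow> real^3^3 \<Rightarrow> real^3
                    \<Rightarrow> real^3^3 \<Rightarrow> real^3 \<Rightarrow> real^3 \<Rightarrow> real^3" where
  "ctrl J kR kO R Om Rd Omd dOmd =
     - kR *\<^sub>R eR R Rd - kO *\<^sub>R eOmega R Om Rd Omd + cross3 Om (J *v Om)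
     - J *v (hat Om *v ((transpose R ** Rd) *v Omd) - (transpose R ** Rd) *v dOmd)"

end

theory Submission
  imports Defs "HOL-Computational_Algebra.Polynomial"
begin

(*
  Along a closed-loop solution write Q = Rd^T R for the attitude error, s = 1 + tr Q,
  v = vee (Q - Q^T), so that Psi = 2 - sqrt s and e_R = v / (2 sqrt s), and e_Omega for the
  angular velocity error.  The proof is the classical Lyapunov argument:

  1. Algebra of hat/vee and of SO(3): a Rodrigues-type identity expresses Q through s and v;
     it gives |v|^2 = s (4 - s), hence |e_R|^2 = (4 - s) / 4, and a formula for Q^T w.
  2. Spectral bounds for J: m |x|^2 <= x.Jx <= lambda_max(J) |x|^2.
  3. Kinematics: Q' = Q hat e_Omega, and the control law reduces the dynamics to
     J e_Omega' = - kR e_R - kO e_Omega; moreover s' = - v.e_Omega and |e_R'| <= |e_Omega|.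
  4. Invariance: the energy V = e_Omega.J e_Omega / 2 + kR Psi satisfies V' = - kO |e_Omega|^2
     while s > 0.  The initial condition says V(0) < 2 kR, whereas at a first time with
     s <= 0 one would have V >= 2 kR; hence Psi < 2 for all times.
  5. Decay: W = V + c e_R.J e_Omega is, for a small weight c > 0, equivalent to
     |e_R|^2 + |e_Omega|^2 and satisfies W' <= - beta W, so W e^(beta t) does not increase.
*)

section \<open>The hat and vee maps\<close>

lemma hat_cross: "hat x *v y = cross3 x y"
  by (simp add: hat_def cross3_def vec_eq_iff forall_3 matrix_vector_mult_def sum_3 vector_def)

lemma transpose_hat: "transpose (hat x) = - hat x"
  by (simp add: hat_def transpose_def vec_eq_iff forall_3 vector_def)

lemma hat_diff: "hat (x - y) = hat x - hat y"
  by (simp add: hat_def vec_eq_iff forall_3 vector_def)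

text \<open>The two identities through which the kinematics \<open>Q' = Q hat w\<close> enters
  the trace and the skew part of \<open>Q\<close>.\<close>

lemma trace_mult_hat: "trace (Q ** hat w) = - (vee (Q - transpose Q) \<bullet> w)"
  by (simp add: hat_def vee_def trace_def sum_3 matrix_matrix_mult_def transpose_def inner_vec_def
      vector_def algebra_simps)

lemma vee_skew_mult_hat:
  "vee (Q ** hat w - transpose (Q ** hat w)) = trace Q *\<^sub>R w - transpose Q *v w"
  by (simp add: hat_def vee_def trace_def sum_3 matrix_matrix_mult_def transpose_def vec_eq_iff
      forall_3 matrix_vector_mult_def vector_def algebra_simps)

lemma bounded_linear_trace: "bounded_linear (trace :: real^3^3 \<Rightarrow> real)"
  by (rule linear_conv_bounded_linear[THEN iffD1]) (auto simp: linear_iff trace_def sum_3 algebra_simps)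

lemma bounded_linear_vee: "bounded_linear vee"
  by (rule linear_conv_bounded_linear[THEN iffD1])
     (auto simp: linear_iff vee_def vec_eq_iff forall_3 vector_def)

lemma bounded_linear_transpose: "bounded_linear (transpose :: real^'n^'m \<Rightarrow> real^'m^'n)"
  by (rule linear_conv_bounded_linear[THEN iffD1]) (auto simp: linear_iff transpose_def vec_eq_iff)

lemma bounded_bilinear_matrix_mult:
  "bounded_bilinear ((**) :: real^'n^'m \<Rightarrow> real^'p^'n \<Rightarrow> real^'p^'m)"
  unfolding bilinear_conv_bounded_bilinear[symmetric] bilinear_def linear_iff
  by (auto simp: vec_eq_iff matrix_matrix_mult_def sum.distrib algebra_simps sum_distrib_left)

lemma bounded_bilinear_matrix_vector_mult:
  "bounded_bilinear ((*v) :: real^'n^'m \<Rightarrow> real^'n \<Rightarrow> real^'m)"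
  unfolding bilinear_conv_bounded_bilinear[symmetric] bilinear_def linear_iff
  by (auto simp: vec_eq_iff matrix_vector_mult_def sum.distrib algebra_simps sum_distrib_left)

lemma matrix_diff_ldistrib: "(A :: real^'n^'m) ** (B - C) = A ** B - A ** C"
  by (simp add: vec_eq_iff matrix_matrix_mult_def sum_subtractf algebra_simps)

lemma matrix_neg_mult: "(- A :: real^'n^'m) ** B = - (A ** B)"
  by (simp add: vec_eq_iff matrix_matrix_mult_def sum_negf)

lemma matrix_neg_vector_mult: "(- A :: real^'n^'m) *v x = - (A *v x)"
  by (simp add: vec_eq_iff matrix_vector_mult_def sum_negf)

lemma symmetric_matrix_inner:
  fixes J :: "real^'n^'n"
  assumes "transpose J = J"
  shows "x \<bullet> (J *v y) = (J *v x) \<bullet> y"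
  by (metis assms dot_lmul_matrix transpose_matrix_vector)

lemma norm_mult_self: "norm x * norm x = x \<bullet> (x :: 'a :: real_inner)"
  by (simp add: power2_norm_eq_inner[symmetric] power2_eq_square)

section \<open>Rotations\<close>

lemma SO3_rotation_matrix: "Q \<in> SO3 \<Longrightarrow> rotation_matrix Q"
  by (simp add: SO3_def rotation_matrix_def orthogonal_matrix)

lemma SO3_right_inverse: "Q \<in> SO3 \<Longrightarrow> Q ** transpose Q = mat 1"
  by (metis SO3_rotation_matrix orthogonal_matrix_def rotation_matrix_def)

lemma SO3_relative:
  assumes "R \<in> SO3" "Rd \<in> SO3"
  shows "transpose Rd ** R \<in> SO3"
proof -
  have "transpose (transpose Rd ** R) ** (transpose Rd ** R) = transpose R ** (Rd ** transpose Rd) ** R"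
    by (simp add: matrix_transpose_mul matrix_mul_assoc)
  also have "\<dots> = mat 1"
    using assms SO3_right_inverse[of Rd] by (simp add: SO3_def matrix_mul_rid)
  finally show ?thesis using assms by (simp add: SO3_def det_mul)
qed

lemma SO3_conj_hat:
  assumes "Q \<in> SO3"
  shows "Q ** hat (transpose Q *v w) = hat w ** Q"
proof -
  have "(Q ** hat (transpose Q *v w)) *v x = (hat w ** Q) *v x" for x
  proof -
    have "(Q ** hat (transpose Q *v w)) *v x = Q *v cross3 (transpose Q *v w) x"
      by (simp add: matrix_vector_mul_assoc[symmetric] hat_cross)
    also have "\<dots> = cross3 (Q *v (transpose Q *v w)) (Q *v x)"
      using cross_rotation_matrix[OF SO3_rotation_matrix[OF assms]] by simp
    also have "Q *v (transpose Q *v w) = w"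
      by (metis SO3_right_inverse[OF assms] matrix_vector_mul_assoc matrix_vector_mul_lid)
    finally show ?thesis by (simp add: matrix_vector_mul_assoc[symmetric] hat_cross)
  qed
  then show ?thesis by (simp add: matrix_eq)
qed

lemma SO3_entries:
  assumes "Q \<in> SO3"
  shows "Q$1$1*Q$1$1 + Q$2$1*Q$2$1 + Q$3$1*Q$3$1 = 1"
   "Q$1$2*Q$1$2 + Q$2$2*Q$2$2 + Q$3$2*Q$3$2 = 1"
   "Q$1$3*Q$1$3 + Q$2$3*Q$2$3 + Q$3$3*Q$3$3 = 1"
   "Q$1$1*Q$1$2 + Q$2$1*Q$2$2 + Q$3$1*Q$3$2 = 0"
   "Q$1$1*Q$1$3 + Q$2$1*Q$2$3 + Q$3$1*Q$3$3 = 0"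
   "Q$1$2*Q$1$3 + Q$2$2*Q$2$3 + Q$3$2*Q$3$3 = 0"
   "Q$1$1*Q$1$1 + Q$1$2*Q$1$2 + Q$1$3*Q$1$3 = 1"
   "Q$2$1*Q$2$1 + Q$2$2*Q$2$2 + Q$2$3*Q$2$3 = 1"
   "Q$3$1*Q$3$1 + Q$3$2*Q$3$2 + Q$3$3*Q$3$3 = 1"
   "Q$1$1*Q$2$1 + Q$1$2*Q$2$2 + Q$1$3*Q$2$3 = 0"
   "Q$1$1*Q$3$1 + Q$1$2*Q$3$2 + Q$1$3*Q$3$3 = 0"
   "Q$2$1*Q$3$1 + Q$2$2*Q$3$2 + Q$2$3*Q$3$3 = 0"
   "Q$1$3 = Q$2$1*Q$3$2 - Q$3$1*Q$2$2"
   "Q$2$3 = Q$3$1*Q$1$2 - Q$1$1*Q$3$2"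
   "Q$3$3 = Q$1$1*Q$2$2 - Q$2$1*Q$1$2"
   "Q$1$1 = Q$2$2*Q$3$3 - Q$3$2*Q$2$3"
   "Q$2$1 = Q$3$2*Q$1$3 - Q$1$2*Q$3$3"
   "Q$3$1 = Q$1$2*Q$2$3 - Q$2$2*Q$1$3"
   "Q$1$2 = Q$2$3*Q$3$1 - Q$3$3*Q$2$1"
   "Q$2$2 = Q$3$3*Q$1$1 - Q$1$3*Q$3$1"
   "Q$3$2 = Q$1$3*Q$2$1 - Q$2$3*Q$1$1"
proof -
  have orth: "\<And>i j. (transpose Q ** Q) $ i $ j = mat 1 $ i $ j" "\<And>i j. (Q ** transpose Q) $ i $ j = mat 1 $ i $ j"
    using assms SO3_right_inverse[OF assms] by (simp_all add: SO3_def)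
  note orth' = orth[unfolded matrix_matrix_mult_def transpose_def mat_def, simplified, unfolded sum_3]
  have cross: "cross3 (Q *v x) (Q *v y) = Q *v (cross3 x y)" for x y
    using cross_rotation_matrix[OF SO3_rotation_matrix[OF assms]] .
  have c12: "cross3 (Q *v axis 1 1) (Q *v axis 2 1) = Q *v axis 3 1"
   and c23: "cross3 (Q *v axis 2 1) (Q *v axis 3 1) = Q *v axis 1 1"
   and c31: "cross3 (Q *v axis 3 1) (Q *v axis 1 1) = Q *v axis 2 1"
    by (simp_all add: cross cross_basis)
  show "Q$1$1*Q$1$1 + Q$2$1*Q$2$1 + Q$3$1*Q$3$1 = 1"
   "Q$1$2*Q$1$2 + Q$2$2*Q$2$2 + Q$3$2*Q$3$2 = 1"
   "Q$1$3*Q$1$3 + Q$2$3*Q$2$3 + Q$3$3*Q$3$3 = 1"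
   "Q$1$1*Q$1$2 + Q$2$1*Q$2$2 + Q$3$1*Q$3$2 = 0"
   "Q$1$1*Q$1$3 + Q$2$1*Q$2$3 + Q$3$1*Q$3$3 = 0"
   "Q$1$2*Q$1$3 + Q$2$2*Q$2$3 + Q$3$2*Q$3$3 = 0"
   "Q$1$1*Q$1$1 + Q$1$2*Q$1$2 + Q$1$3*Q$1$3 = 1"
   "Q$2$1*Q$2$1 + Q$2$2*Q$2$2 + Q$2$3*Q$2$3 = 1"
   "Q$3$1*Q$3$1 + Q$3$2*Q$3$2 + Q$3$3*Q$3$3 = 1"
   "Q$1$1*Q$2$1 + Q$1$2*Q$2$2 + Q$1$3*Q$2$3 = 0"
   "Q$1$1*Q$3$1 + Q$1$2*Q$3$2 + Q$1$3*Q$3$3 = 0"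
   "Q$2$1*Q$3$1 + Q$2$2*Q$3$2 + Q$2$3*Q$3$3 = 0"
    using orth'[of 1 1] orth'[of 2 2] orth'[of 3 3] orth'[of 1 2] orth'[of 1 3] orth'[of 2 3]
    by simp_all
  show "Q$1$3 = Q$2$1*Q$3$2 - Q$3$1*Q$2$2"
   "Q$2$3 = Q$3$1*Q$1$2 - Q$1$1*Q$3$2"
   "Q$3$3 = Q$1$1*Q$2$2 - Q$2$1*Q$1$2"
    using c12 by (simp_all add: cross3_def vec_eq_iff forall_3 matrix_vector_mult_def sum_3 axis_def)
  show "Q$1$1 = Q$2$2*Q$3$3 - Q$3$2*Q$2$3"
   "Q$2$1 = Q$3$2*Q$1$3 - Q$1$2*Q$3$3"
   "Q$3$1 = Q$1$2*Q$2$3 - Q$2$2*Q$1$3"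
    using c23 by (simp_all add: cross3_def vec_eq_iff forall_3 matrix_vector_mult_def sum_3 axis_def)
  show "Q$1$2 = Q$2$3*Q$3$1 - Q$3$3*Q$2$1"
   "Q$2$2 = Q$3$3*Q$1$1 - Q$1$3*Q$3$1"
   "Q$3$2 = Q$1$3*Q$2$1 - Q$2$3*Q$1$1"
    using c31 by (simp_all add: cross3_def vec_eq_iff forall_3 matrix_vector_mult_def sum_3 axis_def)
qed

definition outer :: "real^3 \<Rightarrow> real^3^3" where "outer v = (\<chi> i j. v$i * v$j)"

lemma SO3_rodrigues:
  assumes Q: "Q \<in> SO3"
  defines "v \<equiv> vee (Q - transpose Q)" and "s \<equiv> 1 + trace Q"
  shows "(2 * s) *\<^sub>R Q = ((s - 2) * s) *\<^sub>R mat 1 + outer v + s *\<^sub>R hat v"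
proof -
  note E = SO3_entries[OF Q]
  have sv: "s = 1 + Q$1$1 + Q$2$2 + Q$3$3" "v$1 = Q$3$2 - Q$2$3" "v$2 = Q$1$3 - Q$3$1" "v$3 = Q$2$1 - Q$1$2"
    unfolding s_def v_def by (simp_all add: trace_def sum_3 vee_def transpose_def)
  have "2 * s * Q$1$1 = (s - 2) * s + v$1 * v$1"
    unfolding sv using E(2,3,7,16) by algebra
  moreover have "2 * s * Q$1$2 = v$1 * v$2 - s * v$3" "2 * s * Q$2$1 = v$2 * v$1 + s * v$3"
    unfolding sv using E(4,10,17,19) by algebra+
  moreover have "2 * s * Q$1$3 = v$1 * v$3 + s * v$2" "2 * s * Q$3$1 = v$3 * v$1 - s * v$2"
    unfolding sv using E(5,11,13,18) by algebra+
  moreover have "2 * s * Q$2$2 = (s - 2) * s + v$2 * v$2"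
    unfolding sv using E(1,3,8,20) by algebra
  moreover have "2 * s * Q$2$3 = v$2 * v$3 - s * v$1" "2 * s * Q$3$2 = v$3 * v$2 + s * v$1"
    unfolding sv using E(6,12,14,21) by algebra+
  moreover have "2 * s * Q$3$3 = (s - 2) * s + v$3 * v$3"
    unfolding sv using E(3,7,8,15) by algebra
  ultimately show ?thesis
    by (simp add: vec_eq_iff forall_3 outer_def hat_def mat_def algebra_simps)
qed

text \<open>Taking the trace of the Rodrigues formula: \<open>|v|\<^sup>2 = s (4 - s)\<close>.\<close>

lemma SO3_axis_norm:
  assumes Q: "Q \<in> SO3"
  defines "v \<equiv> vee (Q - transpose Q)" and "s \<equiv> 1 + trace Q"
  shows "v \<bullet> v = s * (4 - s)"
proof -
  have "trace ((2 * s) *\<^sub>R Q) = trace (((s - 2) * s) *\<^sub>R mat 1 + outer v + s *\<^sub>R hat v)"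
    using SO3_rodrigues[OF Q] unfolding v_def s_def by simp
  moreover have "trace Q = s - 1" unfolding s_def by simp
  ultimately show ?thesis
    by (simp add: trace_def sum_3 outer_def hat_def mat_def inner_vec_def vector_def algebra_simps) algebra
qed

lemma SO3_transpose_action:
  assumes Q: "Q \<in> SO3"
  defines "v \<equiv> vee (Q - transpose Q)" and "s \<equiv> 1 + trace Q"
  shows "(2 * s) *\<^sub>R (transpose Q *v w) = ((s - 2) * s) *\<^sub>R w + (v \<bullet> w) *\<^sub>R v - s *\<^sub>R cross3 v w"
proof -
  have "transpose ((2 * s) *\<^sub>R Q) *v w = transpose (((s - 2) * s) *\<^sub>R mat 1 + outer v + s *\<^sub>R hat v) *v w"
    using SO3_rodrigues[OF Q] unfolding v_def s_def by simp
  then show ?thesis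
    by (simp add: vec_eq_iff forall_3 transpose_def matrix_vector_mult_def sum_3 outer_def hat_def mat_def
        inner_vec_def cross3_def vector_def algebra_simps)
qed

section \<open>Spectral bounds for the inertia matrix\<close>

text \<open>A quadratic form attains its extreme values on the unit sphere and scales
  quadratically, so it is sandwiched between two multiples of \<open>|x|\<^sup>2\<close>.\<close>

lemma quadratic_form_extremes:
  fixes J :: "real^'n^'n"
  obtains w u where "norm w = 1" "\<And>x. (w \<bullet> (J *v w)) * (x \<bullet> x) \<le> x \<bullet> (J *v x)"
    and "norm u = 1" "\<And>x. x \<bullet> (J *v x) \<le> (u \<bullet> (J *v u)) * (x \<bullet> x)"
proof -
  define f where "f x = x \<bullet> (J *v x)" for x
  have cont: "continuous_on (sphere 0 1) f" unfolding f_def by (intro continuous_intros)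
  have nonempty: "sphere (0::real^'n) 1 \<noteq> {}"
    by (simp add: sphere_def) (metis norm_axis_1 dist_0_norm)
  have scale: "f (c *\<^sub>R x) = c * c * f x" for c x
    by (simp add: f_def matrix_vector_mult_scaleR)
  have homogeneous: "f ((1 / norm x) *\<^sub>R x) = f x / (x \<bullet> x)" if "x \<noteq> 0" for x
    using that by (simp add: scale dot_square_norm power2_eq_square)
  have on_sphere: "(1 / norm x) *\<^sub>R x \<in> sphere 0 1" if "x \<noteq> 0" for x
    using that by (simp add: norm_sgn[unfolded sgn_div_norm] divide_inverse)
  obtain w where w: "w \<in> sphere 0 1" "\<And>y. y \<in> sphere 0 1 \<Longrightarrow> f w \<le> f y"
    using continuous_attains_inf[OF compact_sphere nonempty cont] by blast
  obtain u where u: "u \<in> sphere 0 1" "\<And>y. y \<in> sphere 0 1 \<Longrightarrow> f y \<le> f u"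
    using continuous_attains_sup[OF compact_sphere nonempty cont] by blast
  show thesis
  proof
    show "norm w = 1" "norm u = 1" using w(1) u(1) by auto
    show "(w \<bullet> (J *v w)) * (x \<bullet> x) \<le> x \<bullet> (J *v x)" for x
      using homogeneous[of x] w(2)[OF on_sphere, of x]
      by (cases "x = 0") (simp_all add: f_def pos_le_divide_eq)
    show "x \<bullet> (J *v x) \<le> (u \<bullet> (J *v u)) * (x \<bullet> x)" for x
      using homogeneous[of x] u(2)[OF on_sphere, of x]
      by (cases "x = 0") (simp_all add: f_def pos_divide_le_eq)
  qed
qed

lemma sym_posdef_coercive:
  assumes "sym_posdef J"
  shows "\<exists>m>0. \<forall>x. m * (x \<bullet> x) \<le> x \<bullet> (J *v x)"
proof -
  obtain w where "norm w = 1" "\<And>x. (w \<bullet> (J *v w)) * (x \<bullet> x) \<le> x \<bullet> (J *v x)"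
    using quadratic_form_extremes by metis
  moreover have "w \<noteq> 0" using \<open>norm w = 1\<close> by auto
  then have "w \<bullet> (J *v w) > 0" using assms by (simp add: sym_posdef_def)
  ultimately show ?thesis by blast
qed

text \<open>If \<open>2 \<epsilon> G + \<epsilon>\<^sup>2 K \<le> 0\<close> for every \<open>\<epsilon>\<close>, then \<open>G \<le> 0\<close>: the first-order
  condition of the variational argument below.\<close>

lemma first_order_nonpos:
  fixes G K :: real
  assumes "\<And>\<epsilon>. 2 * \<epsilon> * G + \<epsilon> * \<epsilon> * K \<le> 0"
  shows "G \<le> 0"
proof (rule ccontr)
  assume "\<not> G \<le> 0"
  define \<epsilon> where "\<epsilon> = G / (\<bar>K\<bar> + 1)"
  have pos: "\<epsilon> > 0" using \<open>\<not> G \<le> 0\<close> by (simp add: \<epsilon>_def)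
  have "\<epsilon> * (2 * G + \<epsilon> * K) \<le> 0" using assms[of \<epsilon>] by (simp add: algebra_simps)
  then have "2 * G + \<epsilon> * K \<le> 0" using pos by (simp add: mult_le_0_iff)
  moreover have "\<epsilon> * \<bar>K\<bar> \<le> G" unfolding \<epsilon>_def using \<open>\<not> G \<le> 0\<close> by (simp add: field_simps)
  moreover have "\<epsilon> * (- \<bar>K\<bar>) \<le> \<epsilon> * K" using pos by (intro mult_left_mono) auto
  ultimately show False using \<open>\<not> G \<le> 0\<close> by linarith
qed

lemma rayleigh_maximiser_eigenvector:
  fixes J :: "real^'n^'n"
  assumes sym: "transpose J = J"
    and bound: "\<And>x. x \<bullet> (J *v x) \<le> \<mu> * (x \<bullet> x)"
    and attained: "u \<bullet> (J *v u) = \<mu> * (u \<bullet> u)"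
  shows "J *v u = \<mu> *\<^sub>R u"
proof -
  define g where "g = J *v u - \<mu> *\<^sub>R u"
  have "2 * \<epsilon> * (g \<bullet> g) + \<epsilon> * \<epsilon> * (g \<bullet> (J *v g) - \<mu> * (g \<bullet> g)) \<le> 0" for \<epsilon>
  proof -
    have cross: "u \<bullet> (J *v g) = g \<bullet> (J *v u)"
      using symmetric_matrix_inner[OF sym, of u g] by (simp add: inner_commute)
    have "(u + \<epsilon> *\<^sub>R g) \<bullet> (J *v (u + \<epsilon> *\<^sub>R g))
        = u \<bullet> (J *v u) + 2 * \<epsilon> * (g \<bullet> (J *v u)) + \<epsilon> * \<epsilon> * (g \<bullet> (J *v g))"
      using cross by (simp add: matrix_vector_right_distrib matrix_vector_mult_scaleR inner_add_left
          inner_add_right algebra_simps)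
    moreover have "(u + \<epsilon> *\<^sub>R g) \<bullet> (u + \<epsilon> *\<^sub>R g) = u \<bullet> u + 2 * \<epsilon> * (g \<bullet> u) + \<epsilon> * \<epsilon> * (g \<bullet> g)"
      by (simp add: inner_add_left inner_add_right inner_commute[of u g] algebra_simps)
    moreover have "g \<bullet> (J *v u) = g \<bullet> g + \<mu> * (g \<bullet> u)"
      unfolding g_def by (simp add: inner_diff_right algebra_simps)
    ultimately have "(u + \<epsilon> *\<^sub>R g) \<bullet> (J *v (u + \<epsilon> *\<^sub>R g)) - \<mu> * ((u + \<epsilon> *\<^sub>R g) \<bullet> (u + \<epsilon> *\<^sub>R g))
        = 2 * \<epsilon> * (g \<bullet> g) + \<epsilon> * \<epsilon> * (g \<bullet> (J *v g) - \<mu> * (g \<bullet> g))"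
      using attained by (simp add: inner_commute[of u g] algebra_simps)
    then show ?thesis using bound[of "u + \<epsilon> *\<^sub>R g"] by linarith
  qed
  then have "g \<bullet> g \<le> 0" by (rule first_order_nonpos)
  then have "g = 0" using inner_ge_zero[of g] by simp
  then show ?thesis unfolding g_def by simp
qed

text \<open>A \<open>3 \<times> 3\<close> matrix has at most three eigenvalues: they are roots of the
  characteristic polynomial.\<close>

lemma eigenvalues_finite:
  fixes J :: "real^3^3"
  shows "finite {l. \<exists>v. v \<noteq> 0 \<and> J *v v = l *\<^sub>R v}"
proof -
  define p where "p = [: det J, - (J$2$2*J$3$3 - J$2$3*J$3$2 + J$1$1*J$3$3 - J$1$3*J$3$1
     + J$1$1*J$2$2 - J$1$2*J$2$1), J$1$1 + J$2$2 + J$3$3, -1 :: real :]"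
  have p_eval: "poly p l = det (J - mat l)" for l
    unfolding p_def by (simp add: det_3 mat_def algebra_simps)
  have "{l. \<exists>v. v \<noteq> 0 \<and> J *v v = l *\<^sub>R v} \<subseteq> {l. poly p l = 0}"
  proof
    fix l assume "l \<in> {l. \<exists>v. v \<noteq> 0 \<and> J *v v = l *\<^sub>R v}"
    then obtain v where v: "v \<noteq> 0" "J *v v = l *\<^sub>R v" by auto
    have "(J - mat l) *v v = 0"
      using v(2) by (simp add: vec_eq_iff matrix_vector_mult_def mat_def sum_3 forall_3 algebra_simps)
    then have "\<not> invertible (J - mat l)"
      using v(1) by (metis invertible_left_inverse matrix_vector_mul_assoc matrix_vector_mul_lid
          matrix_vector_mult_0_right)
    then show "l \<in> {l. poly p l = 0}" by (simp add: p_eval invertible_det_nz)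
  qed
  moreover have "p \<noteq> 0" unfolding p_def by simp
  ultimately show ?thesis using poly_roots_finite finite_subset by blast
qed

lemma lambda_max_bound:
  assumes J: "sym_posdef J"
  shows "\<And>x. x \<bullet> (J *v x) \<le> lambda_max J * (x \<bullet> x)" and "lambda_max J > 0"
proof -
  obtain u where u: "norm u = 1" "\<And>x. x \<bullet> (J *v x) \<le> (u \<bullet> (J *v u)) * (x \<bullet> x)"
    using quadratic_form_extremes by metis
  have "u \<noteq> 0" using u(1) by auto
  have "u \<bullet> u = 1" using u(1) by (simp add: dot_square_norm)
  then have "J *v u = (u \<bullet> (J *v u)) *\<^sub>R u"
    using J u(2) by (intro rayleigh_maximiser_eigenvector) (auto simp: sym_posdef_def)
  then have "u \<bullet> (J *v u) \<in> {l. \<exists>v. v \<noteq> 0 \<and> J *v v = l *\<^sub>R v}"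
    using \<open>u \<noteq> 0\<close> by blast
  then have le: "u \<bullet> (J *v u) \<le> lambda_max J"
    unfolding lambda_max_def using eigenvalues_finite by (rule Max_ge[rotated])
  moreover have "u \<bullet> (J *v u) > 0" using J \<open>u \<noteq> 0\<close> by (simp add: sym_posdef_def)
  ultimately show "lambda_max J > 0" by simp
  show "x \<bullet> (J *v x) \<le> lambda_max J * (x \<bullet> x)" for x
    using u(2)[of x] mult_right_mono[OF le inner_ge_zero[of x]] by linarith
qed

section \<open>Kinematics of the tracking errors\<close>

lemma attitude_error_derivative:
  assumes SO3: "R t \<in> SO3" "Rd t \<in> SO3"
    and dRd: "(Rd has_vector_derivative (Rd t ** hat (Omd t))) (at t within S)"
    and dR: "(R has_vector_derivative (R t ** hat (Om t))) (at t within S)"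
  shows "((\<lambda>t. transpose (Rd t) ** R t) has_vector_derivative
          (transpose (Rd t) ** R t) ** hat (eOmega (R t) (Om t) (Rd t) (Omd t))) (at t within S)"
proof -
  let ?Q = "transpose (Rd t) ** R t"
  have "((\<lambda>t. transpose (Rd t)) has_vector_derivative transpose (Rd t ** hat (Omd t))) (at t within S)"
    by (rule bounded_linear.has_vector_derivative[OF bounded_linear_transpose dRd])
  then have "((\<lambda>t. transpose (Rd t) ** R t) has_vector_derivative
      transpose (Rd t) ** (R t ** hat (Om t)) + transpose (Rd t ** hat (Omd t)) ** R t) (at t within S)"
    by (rule bounded_bilinear.has_vector_derivative[OF bounded_bilinear_matrix_mult _ dR])
  moreover have "transpose (Rd t) ** (R t ** hat (Om t)) + transpose (Rd t ** hat (Omd t)) ** R t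
     = ?Q ** hat (eOmega (R t) (Om t) (Rd t) (Omd t))"
  proof -
    have "?Q ** hat (eOmega (R t) (Om t) (Rd t) (Omd t)) = ?Q ** hat (Om t) - ?Q ** hat (transpose ?Q *v Omd t)"
      unfolding eOmega_def hat_diff by (simp add: matrix_diff_ldistrib matrix_transpose_mul)
    also have "\<dots> = ?Q ** hat (Om t) - hat (Omd t) ** ?Q"
      using SO3_conj_hat[OF SO3_relative[OF SO3]] by simp
    finally show ?thesis
      by (simp add: matrix_transpose_mul transpose_hat matrix_mul_assoc matrix_neg_mult)
  qed
  ultimately show ?thesis by simp
qed

text \<open>Derivative of the angular velocity error \<open>e\<^sub>\<Omega> = \<Omega> - R\<^sup>T Rd \<Omega>\<^sub>d\<close>; this is
  the quantity that the feed-forward part of the control law cancels.\<close>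

lemma rate_error_derivative:
  assumes dRd: "(Rd has_vector_derivative (Rd t ** hat (Omd t))) (at t within S)"
    and dOmd: "(Omd has_vector_derivative dOmd t) (at t within S)"
    and dR: "(R has_vector_derivative (R t ** hat (Om t))) (at t within S)"
    and dOm: "(Om has_vector_derivative dOm t) (at t within S)"
  shows "((\<lambda>t. eOmega (R t) (Om t) (Rd t) (Omd t)) has_vector_derivative
          (dOm t + hat (Om t) *v ((transpose (R t) ** Rd t) *v Omd t) - (transpose (R t) ** Rd t) *v dOmd t))
          (at t within S)"
proof -
  have "((\<lambda>t. transpose (R t)) has_vector_derivative transpose (R t ** hat (Om t))) (at t within S)"
    by (rule bounded_linear.has_vector_derivative[OF bounded_linear_transpose dR])
  then have "((\<lambda>t. transpose (R t) ** Rd t) has_vector_derivative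
      transpose (R t) ** (Rd t ** hat (Omd t)) + transpose (R t ** hat (Om t)) ** Rd t) (at t within S)"
    by (rule bounded_bilinear.has_vector_derivative[OF bounded_bilinear_matrix_mult _ dRd])
  then have "((\<lambda>t. (transpose (R t) ** Rd t) *v Omd t) has_vector_derivative
     (transpose (R t) ** Rd t) *v dOmd t
       + (transpose (R t) ** (Rd t ** hat (Omd t)) + transpose (R t ** hat (Om t)) ** Rd t) *v Omd t)
     (at t within S)"
    by (rule bounded_bilinear.has_vector_derivative[OF bounded_bilinear_matrix_vector_mult _ dOmd])
  moreover have "(transpose (R t) ** (Rd t ** hat (Omd t)) + transpose (R t ** hat (Om t)) ** Rd t) *v Omd t
      = - (hat (Om t) *v ((transpose (R t) ** Rd t) *v Omd t))"
    by (simp add: matrix_vector_mult_add_rdistrib matrix_vector_mul_assoc[symmetric] hat_cross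
        matrix_transpose_mul transpose_hat matrix_mul_assoc matrix_neg_vector_mult)
  ultimately have "((\<lambda>t. Om t - (transpose (R t) ** Rd t) *v Omd t) has_vector_derivative
      dOm t - ((transpose (R t) ** Rd t) *v dOmd t - hat (Om t) *v ((transpose (R t) ** Rd t) *v Omd t)))
      (at t within S)"
    using has_vector_derivative_diff[OF dOm] by simp
  then show ?thesis unfolding eOmega_def by (simp add: algebra_simps)
qed

lemma trace_axis_derivatives:
  assumes dQ: "(Q has_vector_derivative Q t ** hat w) (at t within S)"
  shows "((\<lambda>t. 1 + trace (Q t)) has_real_derivative - (vee (Q t - transpose (Q t)) \<bullet> w)) (at t within S)"
    and "((\<lambda>t. vee (Q t - transpose (Q t))) has_vector_derivative
           trace (Q t) *\<^sub>R w - transpose (Q t) *v w) (at t within S)"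
proof -
  have "((\<lambda>t. trace (Q t)) has_vector_derivative trace (Q t ** hat w)) (at t within S)"
    by (rule bounded_linear.has_vector_derivative[OF bounded_linear_trace dQ])
  then have "((\<lambda>t. 1 + trace (Q t)) has_vector_derivative 0 + trace (Q t ** hat w)) (at t within S)"
    by (rule has_vector_derivative_add[OF has_vector_derivative_const])
  then show "((\<lambda>t. 1 + trace (Q t)) has_real_derivative - (vee (Q t - transpose (Q t)) \<bullet> w)) (at t within S)"
    unfolding has_real_derivative_iff_has_vector_derivative trace_mult_hat by simp
  have "((\<lambda>t. transpose (Q t)) has_vector_derivative transpose (Q t ** hat w)) (at t within S)"
    by (rule bounded_linear.has_vector_derivative[OF bounded_linear_transpose dQ])
  then have "((\<lambda>t. Q t - transpose (Q t)) has_vector_derivative Q t ** hat w - transpose (Q t ** hat w))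
      (at t within S)"
    by (rule has_vector_derivative_diff[OF dQ])
  from bounded_linear.has_vector_derivative[OF bounded_linear_vee this]
  show "((\<lambda>t. vee (Q t - transpose (Q t))) has_vector_derivative
           trace (Q t) *\<^sub>R w - transpose (Q t) *v w) (at t within S)"
    unfolding vee_skew_mult_hat .
qed

text \<open>The algebraic identity behind the derivative of \<open>e\<^sub>R = v / (2 \<surd>s)\<close>, where
  \<open>q = Q\<^sup>T w\<close> is eliminated by the transposed Rodrigues formula.\<close>

lemma eR_derivative_identity:
  fixes r s :: real and q w v :: "real^3"
  assumes r: "r > 0" and s: "s = r * r"
    and rod: "(2 * s) *\<^sub>R q = ((s - 2) * s) *\<^sub>R w + (v \<bullet> w) *\<^sub>R v - s *\<^sub>R cross3 v w"
  shows "(1 / (2 * r)) *\<^sub>R ((s - 1) *\<^sub>R w - q) + ((v \<bullet> w) / (4 * s * r)) *\<^sub>R v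
         = (r / 4) *\<^sub>R w + (1 / (4 * r)) *\<^sub>R cross3 v w"
proof -
  have "s > 0" using r s by simp
  have "1 / (2 * r) * ((s - 1) * w$i - q$i) + (v \<bullet> w) / (4 * s * r) * v$i
        = r / 4 * w$i + 1 / (4 * r) * cross3 v w $ i" for i
  proof -
    have "2 * s * q$i = (s - 2) * s * w$i + (v \<bullet> w) * v$i - s * cross3 v w $ i"
      using rod by (simp add: vec_eq_iff)
    then have num: "2 * s * ((s - 1) * w$i - q$i) + (v \<bullet> w) * v$i = s * (r * r) * w$i + s * cross3 v w $ i"
      unfolding s by algebra
    have "1 / (2 * r) * ((s - 1) * w$i - q$i) + (v \<bullet> w) / (4 * s * r) * v$i
        = (2 * s * ((s - 1) * w$i - q$i) + (v \<bullet> w) * v$i) / (4 * s * r)"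
      using r \<open>s > 0\<close> by (simp add: field_simps)
    also have "\<dots> = r / 4 * w$i + 1 / (4 * r) * cross3 v w $ i"
      unfolding num using r \<open>s > 0\<close> by (simp add: field_simps)
    finally show ?thesis .
  qed
  then show ?thesis by (simp add: vec_eq_iff)
qed

lemma eR_vector_derivative:
  fixes s :: "real \<Rightarrow> real" and v :: "real \<Rightarrow> real^3" and w q :: "real^3"
  assumes ds: "(s has_real_derivative - (v t \<bullet> w)) (at t within S)"
    and dv: "(v has_vector_derivative ((s t - 1) *\<^sub>R w - q)) (at t within S)"
    and pos: "s t > 0"
    and rod: "(2 * s t) *\<^sub>R q = ((s t - 2) * s t) *\<^sub>R w + (v t \<bullet> w) *\<^sub>R v t - s t *\<^sub>R cross3 (v t) w"
  shows "((\<lambda>t. sqrt (s t)) has_real_derivative - (v t \<bullet> w) / (2 * sqrt (s t))) (at t within S)"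
    and "((\<lambda>t. (1 / (2 * sqrt (s t))) *\<^sub>R v t) has_vector_derivative
           (sqrt (s t) / 4) *\<^sub>R w + (1 / (4 * sqrt (s t))) *\<^sub>R cross3 (v t) w) (at t within S)"
proof -
  define r where "r = sqrt (s t)"
  have r: "r > 0" "s t = r * r" using pos by (simp_all add: r_def)
  have dr: "((\<lambda>t. sqrt (s t)) has_real_derivative - (v t \<bullet> w) / (2 * r)) (at t within S)"
    by (rule DERIV_cong[OF DERIV_chain'[OF ds DERIV_real_sqrt[OF pos]]]) (simp add: r_def divide_simps)
  then show "((\<lambda>t. sqrt (s t)) has_real_derivative - (v t \<bullet> w) / (2 * sqrt (s t))) (at t within S)"
    unfolding r_def .
  have "((\<lambda>t. 1 / (2 * sqrt (s t))) has_real_derivative (v t \<bullet> w) / (4 * s t * r)) (at t within S)"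
    by (rule DERIV_cong[OF DERIV_divide[OF DERIV_const DERIV_cmult[OF dr, of 2]]])
       (use r in \<open>simp_all add: r_def[symmetric] field_simps\<close>)
  from has_vector_derivative_scaleR[OF this dv]
  have "((\<lambda>t. (1 / (2 * sqrt (s t))) *\<^sub>R v t) has_vector_derivative
      (1 / (2 * r)) *\<^sub>R ((s t - 1) *\<^sub>R w - q) + ((v t \<bullet> w) / (4 * s t * r)) *\<^sub>R v t) (at t within S)"
    by (simp only: r_def)
  then show "((\<lambda>t. (1 / (2 * sqrt (s t))) *\<^sub>R v t) has_vector_derivative
           (sqrt (s t) / 4) *\<^sub>R w + (1 / (4 * sqrt (s t))) *\<^sub>R cross3 (v t) w) (at t within S)"
    unfolding eR_derivative_identity[OF r rod] by (simp only: r_def)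
qed

lemma eR_derivative_norm_bound:
  fixes r :: real and v w :: "real^3"
  assumes r: "r > 0" "r \<le> 2" and vv: "v \<bullet> v = r * r * (4 - r * r)"
  shows "norm ((r / 4) *\<^sub>R w + (1 / (4 * r)) *\<^sub>R cross3 v w) \<le> norm w"
proof -
  have "norm v ^ 2 = v \<bullet> v" by (simp add: power2_norm_eq_inner)
  also have "\<dots> \<le> (2 * r) ^ 2"
    using vv mult_nonneg_nonneg[of "r * r" "r * r"] by (simp add: power2_eq_square algebra_simps)
  finally have nv: "norm v \<le> 2 * r" by (rule power2_le_imp_le) (use r in simp)
  have "norm (cross3 v w) ^ 2 \<le> (norm v * norm w) ^ 2"
    using norm_cross_dot[of v w] zero_le_power2[of "v \<bullet> w"] by linarith
  then have "norm (cross3 v w) \<le> norm v * norm w" by (rule power2_le_imp_le) simp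
  also have "\<dots> \<le> 2 * r * norm w" using nv by (simp add: mult_right_mono)
  finally have "1 / (4 * r) * norm (cross3 v w) \<le> 1 / (4 * r) * (2 * r * norm w)"
    using r by (intro mult_left_mono) auto
  also have "\<dots> = norm w / 2" using r by simp
  finally have nc: "1 / (4 * r) * norm (cross3 v w) \<le> norm w / 2" .
  have "norm ((r / 4) *\<^sub>R w + (1 / (4 * r)) *\<^sub>R cross3 v w) \<le> r / 4 * norm w + 1 / (4 * r) * norm (cross3 v w)"
    using r by (simp add: norm_triangle_le)
  moreover have "r / 4 * norm w \<le> norm w / 2" using mult_right_mono[OF r(2), of "norm w"] by simp
  ultimately show ?thesis using nc by linarith
qed

text \<open>In the following \<open>a\<close> and \<open>b\<close> stand for \<open>|e\<^sub>R|\<close> and \<open>|e\<^sub>\<Omega>|\<close>.\<close>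

lemma two_mult_le_squares: "2 * (a * b) \<le> a * a + b * (b::real)"
  using sum_squares_ge_zero[of "a - b" 0] by (simp add: algebra_simps power2_eq_square)

text \<open>The attitude function \<open>\<Psi> = 2 - r\<close> is comparable to \<open>|e\<^sub>R|\<^sup>2 = (4 - r\<^sup>2) / 4\<close>.\<close>

lemma attitude_function_bounds:
  fixes r :: real assumes "0 < r" "r \<le> 2"
  shows "(4 - r * r) / 4 \<le> 2 - r" "2 - r \<le> 2 * ((4 - r * r) / 4)"
proof -
  have "0 \<le> (2 - r) * (2 - r)" by simp
  then have "4 - r * r \<le> 4 * (2 - r)" by (simp add: algebra_simps)
  then show "(4 - r * r) / 4 \<le> 2 - r" by simp
  have "0 \<le> r * (2 - r)" using assms by simp
  then have "4 * (2 - r) \<le> 2 * (4 - r * r)" by (simp add: algebra_simps)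
  then show "2 - r \<le> 2 * ((4 - r * r) / 4)" by simp
qed

text \<open>Lower bound of the Lyapunov function \<open>W = e\<^sub>\<Omega>\<cdot>Je\<^sub>\<Omega>/2 + k\<^sub>R \<Psi> + c e\<^sub>R\<cdot>Je\<^sub>\<Omega>\<close>,
  with \<open>p = \<Psi>\<close>, \<open>q = e\<^sub>\<Omega>\<cdot>Je\<^sub>\<Omega>\<close> and \<open>z = e\<^sub>R\<cdot>Je\<^sub>\<Omega>\<close>.\<close>

lemma lyapunov_lower_bound:
  fixes a b p q z kR M c m :: real
  assumes pos: "a \<ge> 0" "b \<ge> 0" "kR > 0" "M > 0" "c > 0" "m > 0"
    and p: "a * a \<le> p" and q: "m * (b * b) \<le> q" and z: "\<bar>z\<bar> \<le> M * (a * b)"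
    and cM: "c * M \<le> m / 4" "c * M \<le> kR / 2"
  shows "min (m / 4) (kR / 2) * (a * a + b * b) \<le> q / 2 + kR * p + c * z"
proof -
  have "c * (- z) \<le> c * (M * (a * b))" using z pos by (intro mult_left_mono) auto
  then have "- (c * z) \<le> c * (M * (a * b))" by simp
  also have "\<dots> \<le> (c * M) * ((a * a + b * b) / 2)"
    using two_mult_le_squares[of a b] pos by (simp add: mult_left_mono)
  also have "\<dots> \<le> m / 8 * (b * b) + kR / 4 * (a * a)"
    using mult_right_mono[OF cM(1), of "b * b"] mult_right_mono[OF cM(2), of "a * a"]
    by (simp add: algebra_simps)
  finally have cross: "- (c * z) \<le> m / 8 * (b * b) + kR / 4 * (a * a)" .
  have "min (m / 4) (kR / 2) * (a * a) \<le> kR / 2 * (a * a)"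
    and "min (m / 4) (kR / 2) * (b * b) \<le> m / 4 * (b * b)"
    by (intro mult_right_mono; simp)+
  moreover have "kR * (a * a) \<le> kR * p" "0 \<le> kR * (a * a)" "0 \<le> m * (b * b)" using p pos by simp_all
  ultimately show ?thesis using cross q by (simp add: algebra_simps)
qed

lemma lyapunov_upper_bound:
  fixes a b p q z kR M c :: real
  assumes pos: "a \<ge> 0" "b \<ge> 0" "kR > 0" "M > 0" "c > 0"
    and p: "p \<le> 2 * (a * a)" and q: "q \<le> M * (b * b)" and z: "\<bar>z\<bar> \<le> M * (a * b)"
  shows "q / 2 + kR * p + c * z \<le> (M / 2 + 2 * kR + c * M) * (a * a + b * b)"
proof -
  have "c * z \<le> c * (M * (a * b))" using z pos by (intro mult_left_mono) auto
  also have "a * b \<le> a * a + b * b"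
    using two_mult_le_squares[of a b] mult_nonneg_nonneg[OF pos(1,2)] by linarith
  then have "c * (M * (a * b)) \<le> (c * M) * (a * a + b * b)" using pos by (simp add: mult_left_mono)
  finally have "c * z \<le> (c * M) * (a * a + b * b)" .
  moreover have "kR * p \<le> 2 * kR * (a * a)" using p pos by simp
  moreover have "M / 2 * (b * b) \<le> M / 2 * (a * a + b * b)"
    and "2 * kR * (a * a) \<le> 2 * kR * (a * a + b * b)" using pos by simp_all
  ultimately show ?thesis using q by (simp add: algebra_simps)
qed

text \<open>Upper bound of \<open>W'\<close>, with \<open>x = e\<^sub>R\<cdot>e\<^sub>\<Omega>\<close> and \<open>y = e\<^sub>R'\<cdot>Je\<^sub>\<Omega>\<close>: for small \<open>c\<close>
  the cross term cannot destroy the dissipation.\<close>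

lemma lyapunov_dissipation_bound:
  fixes a b x y kR kO M c :: real
  assumes pos: "a \<ge> 0" "b \<ge> 0" "kR > 0" "kO > 0" "M > 0" "c > 0"
    and x: "\<bar>x\<bar> \<le> a * b" and y: "\<bar>y\<bar> \<le> M * (b * b)"
    and small: "c * (kO^2 / (2 * kR) + M) \<le> kO / 2"
  shows "- kO * (b * b) - c * kR * (a * a) - c * kO * x + c * y
         \<le> - min (c * kR / 2) (kO / 2) * (a * a + b * b)"
proof -
  have "kR / 2 * (a * a) + kO^2 / (2 * kR) * (b * b) - kO * (a * b) = (kR * a - kO * b)^2 / (2 * kR)"
    using pos by (simp add: field_simps power2_eq_square)
  moreover have "(kR * a - kO * b)^2 / (2 * kR) \<ge> 0" using pos by simp
  ultimately have young: "kO * (a * b) \<le> kR / 2 * (a * a) + kO^2 / (2 * kR) * (b * b)" by linarith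
  have "- x \<le> a * b" using x by linarith
  then have "c * (kO * (- x)) \<le> c * (kO * (a * b))" using pos by (intro mult_left_mono) auto
  then have "- (c * kO * x) \<le> c * (kO * (a * b))" by simp
  also have "\<dots> \<le> c * (kR / 2 * (a * a) + kO^2 / (2 * kR) * (b * b))"
    using young pos by (simp add: mult_left_mono)
  finally have cross: "- (c * kO * x) \<le> c * kR / 2 * (a * a) + c * (kO^2 / (2 * kR)) * (b * b)"
    by (simp add: algebra_simps)
  have "c * y \<le> c * (M * (b * b))" using y pos by (intro mult_left_mono) auto
  moreover have "c * (kO^2 / (2 * kR)) * (b * b) + c * M * (b * b) \<le> kO / 2 * (b * b)"
    using mult_right_mono[OF small, of "b * b"] by (simp add: algebra_simps)
  moreover have "min (c * kR / 2) (kO / 2) * (a * a) \<le> c * kR / 2 * (a * a)"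
    and "min (c * kR / 2) (kO / 2) * (b * b) \<le> kO / 2 * (b * b)"
    by (intro mult_right_mono; simp)+
  ultimately show ?thesis using cross by (simp add: algebra_simps)
qed

lemma nonincreasing_by_derivative:
  fixes V :: "real \<Rightarrow> real"
  assumes T: "0 \<le> T" and cont: "continuous_on {0..} V"
    and deriv: "\<And>x. 0 < x \<Longrightarrow> x < T \<Longrightarrow> \<exists>y. (V has_real_derivative y) (at x within {0..}) \<and> y \<le> 0"
  shows "V T \<le> V 0"
proof (rule DERIV_nonpos_imp_decreasing_open[OF T])
  show "continuous_on {0..T} V" using cont by (rule continuous_on_subset) auto
  fix x assume x: "0 < x" "x < T"
  have "at x within {0..} = at x" using x by (intro at_within_interior) auto
  then show "\<exists>y. (V has_real_derivative y) (at x) \<and> y \<le> 0" using deriv[OF x] by auto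
qed

lemma first_nonpositive_time:
  fixes g :: "real \<Rightarrow> real"
  assumes cont: "continuous_on {0..} g" and "0 \<le> t" "g t \<le> 0"
  obtains T where "0 \<le> T" "T \<le> t" "g T \<le> 0" "\<And>x. 0 \<le> x \<Longrightarrow> x < T \<Longrightarrow> g x > 0"
proof -
  define K where "K = {0..t} \<inter> g -` {..0}"
  have "closed K" unfolding K_def
    by (rule continuous_closed_preimage[OF continuous_on_subset[OF cont]]) auto
  moreover have "bounded K" unfolding K_def by (rule bounded_subset[of "{0..t}"]) auto
  ultimately have "compact K" by (simp add: compact_eq_bounded_closed)
  moreover have "K \<noteq> {}" using assms unfolding K_def by auto
  ultimately obtain T where T: "T \<in> K" "\<And>y. y \<in> K \<Longrightarrow> T \<le> y"
    using continuous_attains_inf[OF _ _ continuous_on_id] by (metis id_apply)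
  show thesis
  proof
    show "0 \<le> T" "T \<le> t" "g T \<le> 0" using T(1) unfolding K_def by auto
    show "g x > 0" if "0 \<le> x" "x < T" for x
    proof (rule ccontr)
      assume "\<not> g x > 0"
      then have "x \<in> K" using that \<open>T \<le> t\<close> unfolding K_def by auto
      then show False using T(2) \<open>x < T\<close> by fastforce
    qed
  qed
qed

text \<open>The constants of the analysis: coercivity \<open>m\<close> and norm bound \<open>M\<close> of \<open>J\<close>, and a
  weight \<open>c\<close> for the cross term of the Lyapunov function, small compared to the gains.\<close>

locale tracking_gains =
  fixes J :: "real^3^3" and kR kO m M c :: real
  assumes J_sym: "transpose J = J"
    and m_pos: "m > 0" and J_coercive: "\<And>x. m * (x \<bullet> x) \<le> x \<bullet> (J *v x)"
    and M_pos: "M > 0" and J_bounded: "\<And>x. norm (J *v x) \<le> M * norm x"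
    and J_lambda_max: "\<And>x. x \<bullet> (J *v x) \<le> lambda_max J * (x \<bullet> x)"
    and lambda_max_pos: "lambda_max J > 0"
    and kR_pos: "kR > 0" and kO_pos: "kO > 0"
    and c_pos: "c > 0" and c_damping: "c * (kO^2 / (2 * kR) + M) \<le> kO / 2"
    and c_inertia: "c * M \<le> m / 4" and c_stiffness: "c * M \<le> kR / 2"
begin

text \<open>The constants of the final estimate: \<open>W\<close> lies between \<open>lower_coeff\<close> and
  \<open>upper_coeff\<close> times the squared error, and \<open>W'\<close> is below \<open>- dissipation_coeff\<close> times it.\<close>

definition lower_coeff :: real where "lower_coeff = min (m / 4) (kR / 2)"
definition upper_coeff :: real where "upper_coeff = M / 2 + 2 * kR + c * M"
definition dissipation_coeff :: real where "dissipation_coeff = min (c * kR / 2) (kO / 2)"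
definition decay_rate :: real where "decay_rate = dissipation_coeff / upper_coeff"
definition overshoot :: real where "overshoot = upper_coeff / lower_coeff"

lemma coeffs_pos: "lower_coeff > 0" "upper_coeff > 0" "dissipation_coeff > 0"
  using m_pos M_pos kR_pos kO_pos c_pos
  by (simp_all add: lower_coeff_def upper_coeff_def dissipation_coeff_def add_pos_pos)

lemma overshoot_pos: "overshoot > 0" and decay_rate_pos: "decay_rate > 0"
  using coeffs_pos by (simp_all add: overshoot_def decay_rate_def)

lemma J_inner_bound: "\<bar>x \<bullet> (J *v y)\<bar> \<le> M * (norm x * norm y)"
proof -
  have "\<bar>x \<bullet> (J *v y)\<bar> \<le> norm x * norm (J *v y)" by (rule Cauchy_Schwarz_ineq2)
  also have "\<dots> \<le> norm x * (M * norm y)" by (rule mult_left_mono[OF J_bounded]) simp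
  finally show ?thesis by (simp add: algebra_simps)
qed

end

lemma tracking_gains_exist:
  assumes J: "sym_posdef J" and kR: "kR > 0" and kO: "kO > 0"
  shows "\<exists>m M c. tracking_gains J kR kO m M c"
proof -
  obtain m where m: "m > 0" "\<And>x. m * (x \<bullet> x) \<le> x \<bullet> (J *v x)"
    using sym_posdef_coercive[OF J] by blast
  obtain M where M: "M > 0" "\<And>x. norm (J *v x) \<le> M * norm x"
    using bounded_linear.pos_bounded[OF matrix_vector_mul_bounded_linear[of J]] by (metis mult.commute)
  define X where "X = kO^2 / (2 * kR) + M"
  define c where "c = min (kO / (2 * X)) (min (m / 4) (kR / 2) / M)"
  have "X > 0" unfolding X_def using kR M by (simp add: add_nonneg_pos)
  then have c: "c > 0" "c * X \<le> kO / 2" "c * M \<le> min (m / 4) (kR / 2)"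
    unfolding c_def using kO m kR M by (auto simp: min_def field_simps)
  show ?thesis
    using J m M c lambda_max_bound[OF J] kR kO
    by (intro exI tracking_gains.intro) (auto simp: sym_posdef_def X_def)
qed

locale closed_loop = tracking_gains +
  fixes Rd R :: "real \<Rightarrow> real^3^3" and Omd dOmd Om dOm :: "real \<Rightarrow> real^3"
  assumes Rd_SO3: "\<And>t. t \<ge> 0 \<Longrightarrow> Rd t \<in> SO3"
    and Rd_deriv: "\<And>t. t \<ge> 0 \<Longrightarrow> (Rd has_vector_derivative (Rd t ** hat (Omd t))) (at t within {0..})"
    and Omd_deriv: "\<And>t. t \<ge> 0 \<Longrightarrow> (Omd has_vector_derivative dOmd t) (at t within {0..})"
    and R_SO3: "\<And>t. t \<ge> 0 \<Longrightarrow> R t \<in> SO3"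
    and R_deriv: "\<And>t. t \<ge> 0 \<Longrightarrow> (R has_vector_derivative (R t ** hat (Om t))) (at t within {0..})"
    and Om_deriv: "\<And>t. t \<ge> 0 \<Longrightarrow> (Om has_vector_derivative dOm t) (at t within {0..})"
    and dynamics: "\<And>t. t \<ge> 0 \<Longrightarrow>
          J *v dOm t + cross3 (Om t) (J *v Om t) = ctrl J kR kO (R t) (Om t) (Rd t) (Omd t) (dOmd t)"
    and Psi_init: "Psi (R 0) (Rd 0) < 2"
    and rate_init: "norm (eOmega (R 0) (Om 0) (Rd 0) (Omd 0)) ^ 2
                      < 2 * kR / lambda_max J * (2 - Psi (R 0) (Rd 0))"
begin

definition Q :: "real \<Rightarrow> real^3^3" where "Q t = transpose (Rd t) ** R t"
definition e_Om :: "real \<Rightarrow> real^3" where "e_Om t = eOmega (R t) (Om t) (Rd t) (Omd t)"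
definition e_R :: "real \<Rightarrow> real^3" where "e_R t = eR (R t) (Rd t)"
definition s :: "real \<Rightarrow> real" where "s t = 1 + trace (Q t)"
definition ax :: "real \<Rightarrow> real^3" where "ax t = vee (Q t - transpose (Q t))"
definition de_Om :: "real \<Rightarrow> real^3" where
  "de_Om t = dOm t + hat (Om t) *v ((transpose (R t) ** Rd t) *v Omd t) - (transpose (R t) ** Rd t) *v dOmd t"

lemma Q_SO3: "t \<ge> 0 \<Longrightarrow> Q t \<in> SO3"
  unfolding Q_def by (intro SO3_relative R_SO3 Rd_SO3)

lemma Q_deriv: "t \<ge> 0 \<Longrightarrow> (Q has_vector_derivative Q t ** hat (e_Om t)) (at t within {0..})"
  unfolding Q_def[abs_def] e_Om_def
  by (intro attitude_error_derivative R_SO3 Rd_SO3 Rd_deriv R_deriv)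

lemma e_Om_deriv: "t \<ge> 0 \<Longrightarrow> (e_Om has_vector_derivative de_Om t) (at t within {0..})"
  unfolding e_Om_def[abs_def] de_Om_def
  by (intro rate_error_derivative Rd_deriv Omd_deriv R_deriv Om_deriv)

text \<open>The control law cancels everything but a spring and a damper.\<close>

lemma error_dynamics: "t \<ge> 0 \<Longrightarrow> J *v de_Om t = - kR *\<^sub>R e_R t - kO *\<^sub>R e_Om t"
  using dynamics[of t]
  by (simp add: de_Om_def e_R_def e_Om_def ctrl_def matrix_vector_right_distrib
      matrix_vector_mult_diff_distrib algebra_simps)

lemma e_R_eq: "e_R t = (1 / (2 * sqrt (s t))) *\<^sub>R ax t"
  unfolding e_R_def eR_def s_def ax_def Q_def by (simp add: matrix_transpose_mul)

lemma Psi_eq: "Psi (R t) (Rd t) = 2 - sqrt (s t)"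
  unfolding Psi_def s_def Q_def by simp

lemma s_deriv: "t \<ge> 0 \<Longrightarrow> (s has_real_derivative - (ax t \<bullet> e_Om t)) (at t within {0..})"
  unfolding s_def[abs_def] ax_def by (rule trace_axis_derivatives(1)[OF Q_deriv])

lemma ax_deriv:
  "t \<ge> 0 \<Longrightarrow> (ax has_vector_derivative (s t - 1) *\<^sub>R e_Om t - transpose (Q t) *v e_Om t) (at t within {0..})"
  using trace_axis_derivatives(2)[OF Q_deriv] unfolding ax_def[abs_def] s_def by simp

lemma ax_norm: "t \<ge> 0 \<Longrightarrow> ax t \<bullet> ax t = s t * (4 - s t)"
  unfolding ax_def s_def by (rule SO3_axis_norm[OF Q_SO3])

lemma transpose_Q_action: "t \<ge> 0 \<Longrightarrow>
    (2 * s t) *\<^sub>R (transpose (Q t) *v e_Om t)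
      = ((s t - 2) * s t) *\<^sub>R e_Om t + (ax t \<bullet> e_Om t) *\<^sub>R ax t - s t *\<^sub>R cross3 (ax t) (e_Om t)"
  unfolding ax_def s_def by (rule SO3_transpose_action[OF Q_SO3])

lemma Je_Om_deriv:
  "t \<ge> 0 \<Longrightarrow> ((\<lambda>t. J *v e_Om t) has_vector_derivative J *v de_Om t) (at t within {0..})"
  by (rule bounded_linear.has_vector_derivative[OF matrix_vector_mul_bounded_linear e_Om_deriv])

lemma continuous_errors:
  "continuous_on {0..} e_Om" "continuous_on {0..} (\<lambda>t. J *v e_Om t)" "continuous_on {0..} s"
  using e_Om_deriv Je_Om_deriv s_deriv
  by (auto simp: continuous_on_eq_continuous_within
      intro: has_vector_derivative_continuous DERIV_continuous)

lemma kinetic_deriv: "t \<ge> 0 \<Longrightarrow>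
    ((\<lambda>t. e_Om t \<bullet> (J *v e_Om t)) has_real_derivative
       - 2 * kR * (e_Om t \<bullet> e_R t) - 2 * kO * (e_Om t \<bullet> e_Om t)) (at t within {0..})"
proof -
  assume t: "t \<ge> 0"
  have "((\<lambda>t. e_Om t \<bullet> (J *v e_Om t)) has_vector_derivative
      e_Om t \<bullet> (J *v de_Om t) + de_Om t \<bullet> (J *v e_Om t)) (at t within {0..})"
    by (rule bounded_bilinear.has_vector_derivative[OF bounded_bilinear_inner e_Om_deriv[OF t] Je_Om_deriv[OF t]])
  moreover have "de_Om t \<bullet> (J *v e_Om t) = e_Om t \<bullet> (J *v de_Om t)"
    using symmetric_matrix_inner[OF J_sym, of "de_Om t" "e_Om t"] by (simp add: inner_commute)
  ultimately show ?thesis using error_dynamics[OF t]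
    by (simp add: has_real_derivative_iff_has_vector_derivative inner_diff_right algebra_simps)
qed

section \<open>Invariance of the region of attraction\<close>

definition energy :: "real \<Rightarrow> real" where
  "energy t = e_Om t \<bullet> (J *v e_Om t) / 2 + kR * (2 - sqrt (s t))"

lemma energy_continuous: "continuous_on {0..} energy"
  unfolding energy_def by (intro continuous_intros continuous_errors) auto

lemma energy_deriv:
  assumes "t \<ge> 0" "s t > 0"
  shows "(energy has_real_derivative - kO * (e_Om t \<bullet> e_Om t)) (at t within {0..})"
proof -
  have "((\<lambda>t. sqrt (s t)) has_real_derivative - (ax t \<bullet> e_Om t) / (2 * sqrt (s t))) (at t within {0..})"
    by (rule eR_vector_derivative(1)[OF s_deriv ax_deriv \<open>s t > 0\<close> transpose_Q_action]) (use assms in simp_all)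
  then have "(energy has_real_derivative
      (- 2 * kR * (e_Om t \<bullet> e_R t) - 2 * kO * (e_Om t \<bullet> e_Om t)) / 2
        + kR * (0 - - (ax t \<bullet> e_Om t) / (2 * sqrt (s t)))) (at t within {0..})"
    unfolding energy_def[abs_def]
    by (intro DERIV_add DERIV_cdivide DERIV_cmult DERIV_diff DERIV_const kinetic_deriv \<open>t \<ge> 0\<close>)
  moreover have "e_Om t \<bullet> e_R t = (ax t \<bullet> e_Om t) / (2 * sqrt (s t))"
    unfolding e_R_eq by (simp add: inner_commute)
  ultimately show ?thesis by (simp add: field_simps minus_divide_left[symmetric])
qed

text \<open>The initial condition is exactly \<open>V(0) < 2 k\<^sub>R\<close>, i.e. the energy needed to reach
  the sublevel set boundary \<open>\<Psi> = 2\<close>.\<close>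

lemma energy_init: "energy 0 < 2 * kR"
proof -
  have "norm (e_Om 0) ^ 2 < 2 * kR / lambda_max J * sqrt (s 0)"
    using rate_init unfolding e_Om_def Psi_eq by simp
  then have "lambda_max J * (e_Om 0 \<bullet> e_Om 0) < 2 * kR * sqrt (s 0)"
    using lambda_max_pos by (simp add: power2_norm_eq_inner field_simps)
  then show ?thesis
    using J_lambda_max[of "e_Om 0"] unfolding energy_def by (simp add: algebra_simps)
qed

text \<open>Invariance: \<open>s\<close> stays positive, since at a first time with \<open>s \<le> 0\<close> the energy,
  which has not increased, would be at least \<open>2 k\<^sub>R\<close>.\<close>

theorem trace_positive: "t \<ge> 0 \<Longrightarrow> s t > 0"
proof (rule ccontr)
  assume "t \<ge> 0" "\<not> s t > 0"
  moreover have "s 0 > 0" using Psi_init unfolding Psi_eq by (smt (verit) real_sqrt_le_0_iff)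
  ultimately obtain T where T: "0 \<le> T" "s T \<le> 0" "\<And>x. 0 \<le> x \<Longrightarrow> x < T \<Longrightarrow> s x > 0"
    using first_nonpositive_time[OF continuous_errors(3)] by (metis not_less)
  have "energy T \<le> energy 0"
  proof (rule nonincreasing_by_derivative[OF T(1) energy_continuous])
    fix x assume "0 < x" "x < T"
    then show "\<exists>y. (energy has_real_derivative y) (at x within {0..}) \<and> y \<le> 0"
      using energy_deriv[of x] T(3)[of x] kO_pos by auto
  qed
  moreover have "energy T \<ge> 2 * kR"
  proof -
    have "0 \<le> e_Om T \<bullet> (J *v e_Om T)"
      using J_coercive[of "e_Om T"] m_pos by (meson order_trans mult_nonneg_nonneg less_imp_le inner_ge_zero)
    moreover have "kR * sqrt (s T) \<le> 0" using T(2) kR_pos by (simp add: mult_nonneg_nonpos)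
    ultimately show ?thesis unfolding energy_def by (simp add: algebra_simps)
  qed
  ultimately show False using energy_init by simp
qed

corollary Psi_below_2: "t \<ge> 0 \<Longrightarrow> Psi (R t) (Rd t) < 2"
  using trace_positive unfolding Psi_eq by simp

section \<open>Exponential decay of the tracking errors\<close>

lemma sqrt_s_bounds: "t \<ge> 0 \<Longrightarrow> 0 < sqrt (s t)" "t \<ge> 0 \<Longrightarrow> sqrt (s t) \<le> 2"
proof -
  assume t: "t \<ge> 0"
  show "0 < sqrt (s t)" using trace_positive[OF t] by simp
  have "0 \<le> s t * (4 - s t)" using ax_norm[OF t] inner_ge_zero[of "ax t"] by simp
  then have "s t \<le> 4" using trace_positive[OF t] by (simp add: zero_le_mult_iff)
  then show "sqrt (s t) \<le> 2" using real_sqrt_le_mono[of "s t" 4] by simp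
qed

lemma e_R_sq: "t \<ge> 0 \<Longrightarrow> e_R t \<bullet> e_R t = (4 - sqrt (s t) * sqrt (s t)) / 4"
  using ax_norm[of t] trace_positive[of t] unfolding e_R_eq by (simp add: field_simps)

lemma Psi_vs_e_R:
  assumes "t \<ge> 0"
  shows "e_R t \<bullet> e_R t \<le> 2 - sqrt (s t)" "2 - sqrt (s t) \<le> 2 * (e_R t \<bullet> e_R t)"
  unfolding e_R_sq[OF assms] using attitude_function_bounds[OF sqrt_s_bounds[OF assms]] by auto

lemma e_R_deriv:
  assumes t: "t \<ge> 0"
  shows "\<exists>D. (e_R has_vector_derivative D) (at t within {0..}) \<and> norm D \<le> norm (e_Om t)"
proof -
  have "e_R = (\<lambda>t. (1 / (2 * sqrt (s t))) *\<^sub>R ax t)" using e_R_eq by auto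
  then have "(e_R has_vector_derivative
      (sqrt (s t) / 4) *\<^sub>R e_Om t + (1 / (4 * sqrt (s t))) *\<^sub>R cross3 (ax t) (e_Om t)) (at t within {0..})"
    using eR_vector_derivative(2)[OF s_deriv[OF t] ax_deriv[OF t] trace_positive[OF t] transpose_Q_action[OF t]]
    by simp
  moreover have "ax t \<bullet> ax t = sqrt (s t) * sqrt (s t) * (4 - sqrt (s t) * sqrt (s t))"
    using ax_norm[OF t] trace_positive[OF t] by simp
  ultimately show ?thesis
    using eR_derivative_norm_bound[OF sqrt_s_bounds[OF t]] by blast
qed

definition lyapunov :: "real \<Rightarrow> real" where
  "lyapunov t = energy t + c * (e_R t \<bullet> (J *v e_Om t))"

definition error_sq :: "real \<Rightarrow> real" where
  "error_sq t = norm (e_R t) ^ 2 + norm (e_Om t) ^ 2"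

lemma lyapunov_bounds:
  assumes t: "t \<ge> 0"
  shows "lower_coeff * error_sq t \<le> lyapunov t" "lyapunov t \<le> upper_coeff * error_sq t"
proof -
  have "lower_coeff * (norm (e_R t) * norm (e_R t) + norm (e_Om t) * norm (e_Om t))
      \<le> e_Om t \<bullet> (J *v e_Om t) / 2 + kR * (2 - sqrt (s t)) + c * (e_R t \<bullet> (J *v e_Om t))"
    unfolding lower_coeff_def
    by (rule lyapunov_lower_bound[OF norm_ge_zero norm_ge_zero kR_pos M_pos c_pos m_pos _ _
          J_inner_bound c_inertia c_stiffness])
       (use Psi_vs_e_R[OF t] J_coercive[of "e_Om t"] in \<open>simp_all add: norm_mult_self\<close>)
  then show "lower_coeff * error_sq t \<le> lyapunov t"
    unfolding error_sq_def lyapunov_def energy_def by (simp add: power2_eq_square)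
  have "e_Om t \<bullet> (J *v e_Om t) / 2 + kR * (2 - sqrt (s t)) + c * (e_R t \<bullet> (J *v e_Om t))
      \<le> upper_coeff * (norm (e_R t) * norm (e_R t) + norm (e_Om t) * norm (e_Om t))"
    unfolding upper_coeff_def
    by (rule lyapunov_upper_bound[OF norm_ge_zero norm_ge_zero kR_pos M_pos c_pos _ _ J_inner_bound])
       (use Psi_vs_e_R[OF t] J_inner_bound[of "e_Om t" "e_Om t"] in \<open>simp_all add: norm_mult_self\<close>)
  then show "lyapunov t \<le> upper_coeff * error_sq t"
    unfolding error_sq_def lyapunov_def energy_def by (simp add: power2_eq_square)
qed

lemma lyapunov_decrease:
  assumes t: "t \<ge> 0"
  shows "\<exists>W'. (lyapunov has_real_derivative W') (at t within {0..}) \<and> W' \<le> - dissipation_coeff * error_sq t"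
proof -
  obtain D where dE: "(e_R has_vector_derivative D) (at t within {0..})" and nD: "norm D \<le> norm (e_Om t)"
    using e_R_deriv[OF t] by blast
  have "((\<lambda>t. e_R t \<bullet> (J *v e_Om t)) has_real_derivative e_R t \<bullet> (J *v de_Om t) + D \<bullet> (J *v e_Om t))
      (at t within {0..})"
    using bounded_bilinear.has_vector_derivative[OF bounded_bilinear_inner dE Je_Om_deriv[OF t]]
    by (simp add: has_real_derivative_iff_has_vector_derivative)
  then have "(lyapunov has_real_derivative
      - kO * (e_Om t \<bullet> e_Om t) + c * (e_R t \<bullet> (J *v de_Om t) + D \<bullet> (J *v e_Om t))) (at t within {0..})"
    unfolding lyapunov_def[abs_def]
    by (intro DERIV_add DERIV_cmult energy_deriv t trace_positive[OF t])
  moreover have "- kO * (e_Om t \<bullet> e_Om t) + c * (e_R t \<bullet> (J *v de_Om t) + D \<bullet> (J *v e_Om t))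
      = - kO * (e_Om t \<bullet> e_Om t) - c * kR * (e_R t \<bullet> e_R t) - c * kO * (e_R t \<bullet> e_Om t) + c * (D \<bullet> (J *v e_Om t))"
  proof -
    have spring_damper: "e_R t \<bullet> (J *v de_Om t) = - kR * (e_R t \<bullet> e_R t) - kO * (e_R t \<bullet> e_Om t)"
      unfolding error_dynamics[OF t] by (simp add: inner_diff_right)
    show ?thesis unfolding spring_damper by (simp add: algebra_simps)
  qed
  moreover have "\<dots> \<le> - dissipation_coeff * error_sq t"
  proof -
    have "\<bar>D \<bullet> (J *v e_Om t)\<bar> \<le> M * (norm (e_Om t) * norm (e_Om t))"
      using J_inner_bound[of D "e_Om t"] nD M_pos
      by (meson order_trans mult_left_mono mult_right_mono norm_ge_zero less_imp_le)
    from lyapunov_dissipation_bound[OF norm_ge_zero norm_ge_zero kR_pos kO_pos M_pos c_pos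
        Cauchy_Schwarz_ineq2 this c_damping]
    show ?thesis unfolding dissipation_coeff_def error_sq_def by (simp add: norm_mult_self power2_eq_square)
  qed
  ultimately show ?thesis by auto
qed

text \<open>Integrating \<open>W' \<le> - \<beta> W\<close>: \<open>W e\<^sup>\<beta>\<^sup>t\<close> does not increase.\<close>

lemma exponential_decay:
  assumes t: "t \<ge> 0"
  shows "error_sq t \<le> overshoot * error_sq 0 * exp (- decay_rate * t)"
proof -
  define G where "G t = lyapunov t * exp (decay_rate * t)" for t
  have G_deriv: "\<exists>y. (G has_real_derivative y) (at x within {0..}) \<and> y \<le> 0" if x: "x \<ge> 0" for x
  proof -
    obtain W' where dW: "(lyapunov has_real_derivative W') (at x within {0..})"
      and W': "W' \<le> - dissipation_coeff * error_sq x"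
      using lyapunov_decrease[OF x] by blast
    have "decay_rate * lyapunov x \<le> dissipation_coeff * error_sq x"
      using mult_left_mono[OF lyapunov_bounds(2)[OF x] less_imp_le[OF decay_rate_pos]] coeffs_pos
      by (simp add: decay_rate_def)
    then have "(W' + decay_rate * lyapunov x) * exp (decay_rate * x) \<le> 0"
      using W' by (simp add: mult_nonpos_nonneg)
    moreover have "(G has_real_derivative (W' + decay_rate * lyapunov x) * exp (decay_rate * x)) (at x within {0..})"
      unfolding G_def[abs_def]
      by (rule DERIV_cong[OF DERIV_mult[OF dW DERIV_chain'[OF DERIV_cmult[OF DERIV_ident] DERIV_exp]]])
         (simp add: algebra_simps)
    ultimately show ?thesis by blast
  qed
  have "continuous_on {0..} G"
    using G_deriv by (auto simp: continuous_on_eq_continuous_within intro: DERIV_continuous)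
  then have "G t \<le> G 0" using G_deriv t by (intro nonincreasing_by_derivative) auto
  have "lower_coeff * error_sq t \<le> lyapunov t" by (rule lyapunov_bounds(1)[OF t])
  also have "lyapunov t = G t * exp (- decay_rate * t)" unfolding G_def by (simp add: exp_minus field_simps)
  also have "\<dots> \<le> G 0 * exp (- decay_rate * t)" using \<open>G t \<le> G 0\<close> by simp
  also have "\<dots> \<le> upper_coeff * error_sq 0 * exp (- decay_rate * t)"
    using lyapunov_bounds(2)[of 0] unfolding G_def by simp
  finally show ?thesis
    using coeffs_pos by (simp add: overshoot_def field_simps)
qed

theorem tracking_estimate:
  "(\<forall>t\<ge>0. Psi (R t) (Rd t) < 2) \<and>
   (\<forall>t\<ge>0. norm (eR (R t) (Rd t)) ^ 2 + norm (eOmega (R t) (Om t) (Rd t) (Omd t)) ^ 2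
      \<le> overshoot * (norm (eR (R 0) (Rd 0)) ^ 2 + norm (eOmega (R 0) (Om 0) (Rd 0) (Omd 0)) ^ 2)
          * exp (- decay_rate * t))"
  using Psi_below_2 exponential_decay unfolding error_sq_def e_R_def e_Om_def by blast

end

theorem proposition3:
  fixes J :: "real^3^3" and kR kO :: real
  assumes J: "sym_posdef J" and kR: "kR > 0" and kO: "kO > 0"
  shows "\<exists>C \<beta>. C > 0 \<and> \<beta> > 0 \<and>
    (\<forall>(Rd :: real \<Rightarrow> real^3^3) (Omd :: real \<Rightarrow> real^3) (dOmd :: real \<Rightarrow> real^3)
       (R :: real \<Rightarrow> real^3^3) (Om :: real \<Rightarrow> real^3) (dOm :: real \<Rightarrow> real^3).
      (\<forall>t\<ge>0. Rd t \<in> SO3) \<and>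
      (\<forall>t\<ge>0. (Rd has_vector_derivative (Rd t ** hat (Omd t))) (at t within {0..})) \<and>
      (\<forall>t\<ge>0. (Omd has_vector_derivative dOmd t) (at t within {0..})) \<and>
      continuous_on {0..} dOmd \<and>
      (\<forall>t\<ge>0. R t \<in> SO3) \<and>
      (\<forall>t\<ge>0. (R has_vector_derivative (R t ** hat (Om t))) (at t within {0..})) \<and>
      (\<forall>t\<ge>0. (Om has_vector_derivative dOm t) (at t within {0..})) \<and>
      (\<forall>t\<ge>0. J *v dOm t + cross3 (Om t) (J *v Om t)
               = ctrl J kR kO (R t) (Om t) (Rd t) (Omd t) (dOmd t)) \<and>
      Psi (R 0) (Rd 0) < 2 \<and>
      norm (eOmega (R 0) (Om 0) (Rd 0) (Omd 0)) ^ 2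
        < 2 * kR / lambda_max J * (2 - Psi (R 0) (Rd 0))
      \<longrightarrow>
      (\<forall>t\<ge>0. Psi (R t) (Rd t) < 2) \<and>
      (\<forall>t\<ge>0. norm (eR (R t) (Rd t)) ^ 2 + norm (eOmega (R t) (Om t) (Rd t) (Omd t)) ^ 2
         \<le> C * (norm (eR (R 0) (Rd 0)) ^ 2 + norm (eOmega (R 0) (Om 0) (Rd 0) (Omd 0)) ^ 2)
             * exp (- \<beta> * t)))"
proof -
  obtain m M c where gains: "tracking_gains J kR kO m M c"
    using tracking_gains_exist[OF J kR kO] by blast
  interpret tracking_gains J kR kO m M c by (rule gains)
  show ?thesis
    apply (rule exI[of _ overshoot], rule exI[of _ decay_rate])
    apply (rule conjI[OF overshoot_pos conjI[OF decay_rate_pos]])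
    apply (intro allI impI, elim conjE)
    subgoal for Rd Omd dOmd R Om dOm
      by (rule closed_loop.tracking_estimate[of J kR kO m M c Rd R Omd dOmd Om dOm],
          rule closed_loop.intro[OF gains closed_loop_axioms.intro]) simp_all
    done
qed

end
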